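(* Let $C\in\{0.15,0.45\}$ and define on $[-\pi,\pi]$ $$z_1(x)=2e^{1-\frac{1}{1-(x/\pi)^2}}-1,\qquad z_2(x)=\sin(x-C),$$ where $z_1(\pm\pi)=-1$ (the continuous, indeed smooth, extension). Then the curvature $$K(x)=\frac{-\partial_{xx}z_1(x)\,\partial_x z_2(x)+\partial_{xx}z_2(x)\,\partial_x z_1(x)}{\big(\partial_x z_1(x)^2+\partial_x z_2(x)^2\big)^{3/2}}$$ of the closed curve $x\mapsto(z_1(x),z_2(x))$ vanishes, for $x\in(-\pi,\pi]$, only at $x=\pi$.
   Context: Derivatives of $z_1$ at $x=\pm\pi$ are understood as limits (all of them equal $0$); the curve $(z_1,z_2)$ is regarded as $2\pi$-periodic, so $x=-\pi$ and $x=\pi$ represent the same point. *)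

theory Defs
  imports "HOL-Analysis.Analysis"
begin

text \<open>Outside
  [-pi, pi] we extend it by the constant -1, which is a smooth (flat) extension, so that the
  derivatives at pi and -pi (computed as genuine two-sided derivatives) coincide with the
  one-sided limits, all equal to 0.\<close>
definition z1 :: "real \<Rightarrow> real" where
  "z1 x = (if \<bar>x\<bar> < pi then 2 * exp (1 - 1 / (1 - (x / pi)^2)) - 1 else -1)"

definition z2 :: "real \<Rightarrow> real \<Rightarrow> real" where
  "z2 C x = sin (x - C)"

definition curvature :: "real \<Rightarrow> real \<Rightarrow> real" where
  "curvature C x =
     (- deriv (deriv z1) x * deriv (z2 C) x + deriv (deriv (z2 C)) x * deriv z1 x)
     / ((deriv z1 x)^2 + (deriv (z2 C) x)^2) powr (3/2)"

end

theory Submission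
  imports Defs "HOL-Real_Asymp.Real_Asymp"
begin

text \<open>
  For \<open>|x| < pi\<close> write \<open>w = 1 - (x/pi)^2\<close>, so that \<open>z1 = 2 exp (1 - 1/w) - 1\<close>. Differentiating
  twice, the numerator of the curvature becomes \<open>-2 exp (1 - 1/w) F(C, x) / (pi^2 w^4)\<close> with
  \<open>F(C, t) = (6 (t/pi)^4 - 2) cos (t - C) - 2 t w^2 sin (t - C)\<close>; hence the curvature vanishes
  nowhere in \<open>(-pi, pi)\<close> once \<open>F(C, t) < 0\<close> there. This inequality is certified by interval
  arithmetic with fixed-point integers, evaluated inside the logic; as \<open>F(C, -t) = F(-C, t)\<close>, only
  \<open>t \<ge> 0\<close> has to be covered. At \<open>x = pi\<close> the function \<open>z1\<close> is flat, so both of its derivatives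
  and with them the curvature vanish.
\<close>

section \<open>Polynomial bounds for sine and cosine\<close>

lemma Maclaurin_cos_bound:
  "\<bar>cos x - (\<Sum>m<n. cos_coeff m * x ^ m)\<bar> \<le> inverse (fact n) * \<bar>x\<bar> ^ n"
proof -
  obtain t where "cos x = (\<Sum>m<n. cos_coeff m * x ^ m) + cos t / fact n * x ^ n"
    using Maclaurin_cos_expansion[of x n] by auto
  then have "\<bar>cos x - (\<Sum>m<n. cos_coeff m * x ^ m)\<bar> = \<bar>cos t\<bar> * (inverse (fact n) * \<bar>x\<bar> ^ n)"
    by (simp add: abs_mult power_abs divide_inverse)
  also have "\<dots> \<le> inverse (fact n) * \<bar>x\<bar> ^ n"
    by (simp add: mult_left_le_one_le)
  finally show ?thesis .
qed

lemma sin_ge_cubic: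
  fixes x :: real
  assumes "0 \<le> x"
  shows "x - x ^ 3 / 6 \<le> sin x"
proof -
  have "\<bar>sin x - x\<bar> \<le> x ^ 3 / 6"
    using Maclaurin_sin_bound[of x 3] assms
    by (simp add: sin_coeff_def lessThan_nat_numeral fact_numeral)
  then show ?thesis
    unfolding abs_le_iff by linarith
qed

lemma cos_ge_quadratic:
  fixes x :: real
  shows "1 - x ^ 2 / 2 \<le> cos x"
proof -
  have "(sin (x / 2))\<^sup>2 \<le> (x / 2)\<^sup>2"
    using abs_sin_x_le_abs_x[of "x / 2"] by (metis abs_ge_zero power2_abs power_mono)
  then show ?thesis
    using cos_double_sin[of "x / 2"] by (simp add: power_divide)
qed

lemma cos_le_quartic:
  fixes x :: real
  shows "cos x \<le> 1 - x ^ 2 / 2 + x ^ 4 / 24"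
proof -
  have "\<bar>cos x - (1 - x ^ 2 / 2)\<bar> \<le> x ^ 4 / 24"
    using Maclaurin_cos_bound[of x 4]
    by (simp add: cos_coeff_def lessThan_nat_numeral fact_numeral power_abs)
  then show ?thesis
    unfolding abs_le_iff by linarith
qed

section \<open>Interval arithmetic on fixed-point numbers\<close>

lemma mult_between_corners:
  fixes x y :: real
  assumes "a \<le> x" "x \<le> b" "c \<le> y" "y \<le> d"
  shows "min (min (a * c) (a * d)) (min (b * c) (b * d)) \<le> x * y"
    and "x * y \<le> max (max (a * c) (a * d)) (max (b * c) (b * d))"
proof -
  have "min (a * y) (b * y) \<le> x * y \<and> x * y \<le> max (a * y) (b * y)"
    using assms(1,2) mult_right_mono[of _ _ y] mult_right_mono_neg[of _ _ y]
    by (cases "0 \<le> y") force+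
  moreover have "min (a * c) (a * d) \<le> a * y \<and> a * y \<le> max (a * c) (a * d)"
    using assms(3,4) mult_left_mono[of _ _ a] mult_left_mono_neg[of _ _ a]
    by (cases "0 \<le> a") force+
  moreover have "min (b * c) (b * d) \<le> b * y \<and> b * y \<le> max (b * c) (b * d)"
    using assms(3,4) mult_left_mono[of _ _ b] mult_left_mono_neg[of _ _ b]
    by (cases "0 \<le> b") force+
  ultimately show "min (min (a * c) (a * d)) (min (b * c) (b * d)) \<le> x * y"
    and "x * y \<le> max (max (a * c) (a * d)) (max (b * c) (b * d))"
    by linarith+
qed

type_synonym ivl = "int \<times> int"

text \<open>\<open>(l, h)\<close> stands for the interval \<open>[l/S, h/S]\<close> of fixed-point numbers with denominator \<open>S\<close>.\<close>

definition enclosed :: "int \<Rightarrow> real \<Rightarrow> ivl \<Rightarrow> bool" where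
  "enclosed S x I \<longleftrightarrow> of_int (fst I) \<le> x * of_int S \<and> x * of_int S \<le> of_int (snd I)"

fun ivl_add :: "ivl \<Rightarrow> ivl \<Rightarrow> ivl" where
  "ivl_add (a, b) (c, d) = (a + c, b + d)"

fun ivl_neg :: "ivl \<Rightarrow> ivl" where
  "ivl_neg (a, b) = (- b, - a)"

definition ivl_sub :: "ivl \<Rightarrow> ivl \<Rightarrow> ivl" where
  "ivl_sub I J = ivl_add I (ivl_neg J)"

text \<open>Endpoints are rounded outwards: \<open>div\<close> rounds towards \<open>-\<infinity>\<close>.\<close>

fun ivl_mul :: "int \<Rightarrow> ivl \<Rightarrow> ivl \<Rightarrow> ivl" where
  "ivl_mul S (a, b) (c, d) =
     (min (min (a * c) (a * d)) (min (b * c) (b * d)) div S,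
      - ((- max (max (a * c) (a * d)) (max (b * c) (b * d))) div S))"

lemma enclosed_add: "enclosed S x I \<Longrightarrow> enclosed S y J \<Longrightarrow> enclosed S (x + y) (ivl_add I J)"
  by (cases I; cases J) (simp add: enclosed_def distrib_right)

lemma enclosed_neg: "enclosed S x I \<Longrightarrow> enclosed S (- x) (ivl_neg I)"
  by (cases I) (simp add: enclosed_def)

lemma enclosed_sub: "enclosed S x I \<Longrightarrow> enclosed S y J \<Longrightarrow> enclosed S (x - y) (ivl_sub I J)"
  unfolding ivl_sub_def using enclosed_add enclosed_neg by fastforce

lemma enclosed_of_int: "enclosed S (of_int k) (k * S, k * S)"
  by (simp add: enclosed_def)

lemma enclosed_mul:
  assumes "0 < S" "enclosed S x I" "enclosed S y J"
  shows "enclosed S (x * y) (ivl_mul S I J)"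
proof -
  obtain a b c d where I: "I = (a, b)" and J: "J = (c, d)" by fastforce
  define X Y where "X = x * of_int S" and "Y = y * of_int S"
  have "of_int a \<le> X" "X \<le> of_int b" "of_int c \<le> Y" "Y \<le> of_int d"
    using assms(2,3) by (simp_all add: enclosed_def I J X_def Y_def)
  note corners = mult_between_corners[OF this]
  define lo hi where "lo = min (min (a * c) (a * d)) (min (b * c) (b * d))"
    and "hi = max (max (a * c) (a * d)) (max (b * c) (b * d))"
  have "of_int lo \<le> X * Y" "X * Y \<le> of_int hi"
    using corners by (simp_all add: lo_def hi_def of_int_min of_int_max)
  moreover have "X * Y = x * y * of_int S * of_int S"
    by (simp add: X_def Y_def)
  ultimately have "of_int lo / of_int S \<le> x * y * of_int S"
    "x * y * of_int S \<le> of_int hi / of_int S"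
    using assms(1) by (simp_all add: field_simps)
  moreover have "real_of_int (lo div S) \<le> of_int lo / of_int S"
    "real_of_int hi / of_int S \<le> - of_int ((- hi) div S)"
    using real_of_int_div4[of lo S] real_of_int_div4[of "- hi" S] by simp_all
  ultimately show ?thesis
    by (simp add: enclosed_def I J lo_def hi_def)
qed

text \<open>
  Enclosures of \<open>sin d\<close> and \<open>cos d\<close> for \<open>d \<in> [a/S, b/S]\<close>, \<open>0 \<le> a\<close>, from
  \<open>d - d^3/6 \<le> sin d \<le> d\<close> and \<open>1 - d^2/2 \<le> cos d \<le> 1 - d^2/2 + d^4/24\<close>.
\<close>

definition sin_small_ivl :: "int \<Rightarrow> int \<Rightarrow> int \<Rightarrow> ivl" where
  "sin_small_ivl S a b = (a - b ^ 3 div (6 * S ^ 2) - 1, b)"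

definition cos_small_ivl :: "int \<Rightarrow> int \<Rightarrow> int \<Rightarrow> ivl" where
  "cos_small_ivl S a b =
     (S - b ^ 2 div (2 * S) - 1, S - a ^ 2 div (2 * S) + b ^ 4 div (24 * S ^ 3) + 1)"

lemma enclosed_sin_small:
  assumes "0 < S" "0 \<le> a" "of_int a \<le> d * of_int S" "d * of_int S \<le> of_int b"
  shows "enclosed S (sin d) (sin_small_ivl S a b)"
proof -
  define s where "s = real_of_int S"
  have s: "0 < s" using assms(1) by (simp add: s_def)
  have "0 \<le> d * s"
    using assms(2,3) by (simp add: s_def)
  with s have d: "0 \<le> d" by (simp add: zero_le_mult_iff)
  have "real_of_int (a - b ^ 3 div (6 * S ^ 2) - 1) \<le> of_int a - of_int b ^ 3 / (6 * s ^ 2)"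
    using real_of_int_div3[of "b ^ 3" "6 * S ^ 2"] by (simp add: s_def)
  also have "\<dots> \<le> d * s - (d * s) ^ 3 / (6 * s ^ 2)"
    using assms(3,4) d s by (intro diff_mono divide_right_mono power_mono) (simp_all add: s_def)
  also have "\<dots> = (d - d ^ 3 / 6) * s"
    using s by (simp add: field_simps power3_eq_cube power2_eq_square)
  also have "\<dots> \<le> sin d * s"
    using sin_ge_cubic[OF d] s by simp
  finally have lower: "real_of_int (a - b ^ 3 div (6 * S ^ 2) - 1) \<le> sin d * s" .
  have "sin d * s \<le> d * s"
    using sin_x_le_x[OF d] s by simp
  with assms(4) have "sin d * s \<le> of_int b" by (simp add: s_def)
  with lower show ?thesis
    by (simp add: enclosed_def sin_small_ivl_def s_def)
qed

lemma enclosed_cos_small: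
  assumes "0 < S" "0 \<le> a" "of_int a \<le> d * of_int S" "d * of_int S \<le> of_int b"
  shows "enclosed S (cos d) (cos_small_ivl S a b)"
proof -
  define s where "s = real_of_int S"
  have s: "0 < s" using assms(1) by (simp add: s_def)
  have ds: "0 \<le> d * s"
    using assms(2,3) by (simp add: s_def)
  have scaled: "(1 - d ^ 2 / 2) * s = s - (d * s) ^ 2 / (2 * s)"
    "(1 - d ^ 2 / 2 + d ^ 4 / 24) * s = s - (d * s) ^ 2 / (2 * s) + (d * s) ^ 4 / (24 * s ^ 3)"
    using s by (simp_all add: field_simps power2_eq_square power3_eq_cube power4_eq_xxxx)
  have "real_of_int (S - b ^ 2 div (2 * S) - 1) \<le> s - of_int b ^ 2 / (2 * s)"
    using real_of_int_div3[of "b ^ 2" "2 * S"] by (simp add: s_def)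
  also have "\<dots> \<le> s - (d * s) ^ 2 / (2 * s)"
    using assms(4) ds s by (intro diff_mono divide_right_mono power_mono) (simp_all add: s_def)
  also have "\<dots> \<le> cos d * s"
    using cos_ge_quadratic[of d] s scaled(1) by (metis mult_le_cancel_right_pos)
  finally have lower: "real_of_int (S - b ^ 2 div (2 * S) - 1) \<le> cos d * s" .
  have "cos d * s \<le> s - (d * s) ^ 2 / (2 * s) + (d * s) ^ 4 / (24 * s ^ 3)"
    using cos_le_quartic[of d] s scaled(2) by (metis mult_le_cancel_right_pos)
  also have "\<dots> \<le> s - of_int a ^ 2 / (2 * s) + of_int b ^ 4 / (24 * s ^ 3)"
    using assms(2,3,4) ds s
    by (intro add_mono diff_mono divide_right_mono power_mono) (simp_all add: s_def)
  also have "\<dots> \<le> real_of_int (S - a ^ 2 div (2 * S) + b ^ 4 div (24 * S ^ 3) + 1)"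
    using real_of_int_div4[of "a ^ 2" "2 * S"] real_of_int_div3[of "b ^ 4" "24 * S ^ 3"]
    by (simp add: s_def)
  finally show ?thesis
    using lower by (simp add: enclosed_def cos_small_ivl_def s_def)
qed

lemma enclosed_sin_Maclaurin:
  assumes "0 \<le> S"
    and "of_int l \<le> ((\<Sum>m<n. sin_coeff m * x ^ m) - inverse (fact n) * \<bar>x\<bar> ^ n) * of_int S"
    and "((\<Sum>m<n. sin_coeff m * x ^ m) + inverse (fact n) * \<bar>x\<bar> ^ n) * of_int S \<le> of_int h"
  shows "enclosed S (sin x) (l, h)"
proof -
  define P r where "P = (\<Sum>m<n. sin_coeff m * x ^ m)" and "r = inverse (fact n) * \<bar>x\<bar> ^ n"
  have "\<bar>sin x - P\<bar> \<le> r"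
    unfolding P_def r_def by (rule Maclaurin_sin_bound)
  then have "P - r \<le> sin x" "sin x \<le> P + r"
    unfolding abs_le_iff by linarith+
  moreover have "0 \<le> real_of_int S"
    using assms(1) by simp
  ultimately have "(P - r) * of_int S \<le> sin x * of_int S" "sin x * of_int S \<le> (P + r) * of_int S"
    by (simp_all add: mult_right_mono)
  with assms(2,3)[folded P_def r_def] show ?thesis
    unfolding enclosed_def by simp
qed

lemma enclosed_cos_Maclaurin:
  assumes "0 \<le> S"
    and "of_int l \<le> ((\<Sum>m<n. cos_coeff m * x ^ m) - inverse (fact n) * \<bar>x\<bar> ^ n) * of_int S"
    and "((\<Sum>m<n. cos_coeff m * x ^ m) + inverse (fact n) * \<bar>x\<bar> ^ n) * of_int S \<le> of_int h"
  shows "enclosed S (cos x) (l, h)"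
proof -
  define P r where "P = (\<Sum>m<n. cos_coeff m * x ^ m)" and "r = inverse (fact n) * \<bar>x\<bar> ^ n"
  have "\<bar>cos x - P\<bar> \<le> r"
    unfolding P_def r_def by (rule Maclaurin_cos_bound)
  then have "P - r \<le> cos x" "cos x \<le> P + r"
    unfolding abs_le_iff by linarith+
  moreover have "0 \<le> real_of_int S"
    using assms(1) by simp
  ultimately have "(P - r) * of_int S \<le> cos x * of_int S" "cos x * of_int S \<le> (P + r) * of_int S"
    by (simp_all add: mult_right_mono)
  with assms(2,3)[folded P_def r_def] show ?thesis
    unfolding enclosed_def by simp
qed

section \<open>Negativity of the curvature factor\<close>

definition curvature_factor :: "real \<Rightarrow> real \<Rightarrow> real" where
  "curvature_factor C t =
     (6 * (t / pi) ^ 4 - 2) * cos (t - C) - 2 * t * (1 - (t / pi) ^ 2) ^ 2 * sin (t - C)"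

lemma curvature_factor_minus: "curvature_factor C (- t) = curvature_factor (- C) t"
  using cos_minus[of "t + C"] sin_minus[of "t + C"] by (simp add: curvature_factor_def)

context
  fixes S :: int and IP SC CC :: ivl
begin

text \<open>
  Evaluates \<open>F(C, t) = cos t (A cos C + B sin C) + sin t (A sin C - B cos C)\<close>, where
  \<open>A = 6 u^4 - 2\<close>, \<open>B = 2 t (1 - u^2)^2\<close> and \<open>u = t/pi\<close>; the arguments enclose \<open>t\<close>, \<open>sin t\<close>, \<open>cos t\<close>.
\<close>

definition curvature_factor_ivl :: "ivl \<Rightarrow> ivl \<Rightarrow> ivl \<Rightarrow> ivl" where
  "curvature_factor_ivl T SN CS =
    (let U = ivl_mul S T IP;
         U2 = ivl_mul S U U;
         A = ivl_sub (ivl_mul S (6 * S, 6 * S) (ivl_mul S U2 U2)) (2 * S, 2 * S);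
         W = ivl_sub (S, S) U2;
         B = ivl_mul S (ivl_mul S (2 * S, 2 * S) T) (ivl_mul S W W)
     in ivl_add (ivl_mul S CS (ivl_add (ivl_mul S A CC) (ivl_mul S B SC)))
                (ivl_mul S SN (ivl_sub (ivl_mul S A SC) (ivl_mul S B CC))))"

text \<open>
  Checks \<open>F(C, t) < 0\<close> for \<open>t \<in> [(g + a)/S, (g + b)/S]\<close>, given enclosures \<open>s\<close>, \<open>c\<close> of \<open>sin\<close> and \<open>cos\<close>
  at \<open>g/S\<close>; the addition theorems handle the offset \<open>d \<in> [a/S, b/S]\<close>.
\<close>

definition certify_box :: "ivl \<Rightarrow> ivl \<Rightarrow> int \<Rightarrow> int \<Rightarrow> int \<Rightarrow> bool" where
  "certify_box s c g a b =
    (let SD = sin_small_ivl S a b; CD = cos_small_ivl S a b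
     in snd (curvature_factor_ivl (g + a, g + b)
              (ivl_add (ivl_mul S s CD) (ivl_mul S c SD))
              (ivl_sub (ivl_mul S c CD) (ivl_mul S s SD))) < 0)"

primrec certify_cell :: "nat \<Rightarrow> ivl \<Rightarrow> ivl \<Rightarrow> int \<Rightarrow> int \<Rightarrow> int \<Rightarrow> bool" where
  "certify_cell 0 s c g a b = certify_box s c g a b"
| "certify_cell (Suc n) s c g a b =
     (if certify_box s c g a b then True
      else certify_cell n s c g a ((a + b) div 2) \<and> certify_cell n s c g ((a + b) div 2) b)"

text \<open>Each step moves the grid point \<open>g\<close> by \<open>H\<close>, rotating \<open>s\<close>, \<open>c\<close> by the angle \<open>H/S\<close>.\<close>

primrec certify_grid :: "nat \<Rightarrow> int \<Rightarrow> ivl \<Rightarrow> ivl \<Rightarrow> nat \<Rightarrow> ivl \<Rightarrow> ivl \<Rightarrow> int \<Rightarrow> bool" where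
  "certify_grid depth H SH CH 0 s c g = True"
| "certify_grid depth H SH CH (Suc k) s c g =
     (certify_cell depth s c g 0 H \<and>
      certify_grid depth H SH CH k
        (ivl_add (ivl_mul S s CH) (ivl_mul S c SH))
        (ivl_sub (ivl_mul S c CH) (ivl_mul S s SH)) (g + H))"

end

context
  fixes S :: int and IP SC CC :: ivl and C :: real
  assumes S: "0 < S"
    and IP: "enclosed S (1 / pi) IP" and SC: "enclosed S (sin C) SC" and CC: "enclosed S (cos C) CC"
begin

lemma enclosed_curvature_factor:
  assumes T: "enclosed S t T" and SN: "enclosed S (sin t) SN" and CS: "enclosed S (cos t) CS"
  shows "enclosed S (curvature_factor C t) (curvature_factor_ivl S IP SC CC T SN CS)"
proof -
  note mul = enclosed_mul[OF S]
  define u where "u = t * (1 / pi)"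
  define A where "A = 6 * ((u * u) * (u * u)) - 2"
  define B where "B = 2 * t * ((1 - u * u) * (1 - u * u))"
  define IU where "IU = ivl_mul S T IP"
  define IU2 where "IU2 = ivl_mul S IU IU"
  define IA where "IA = ivl_sub (ivl_mul S (6 * S, 6 * S) (ivl_mul S IU2 IU2)) (2 * S, 2 * S)"
  define IW where "IW = ivl_sub (S, S) IU2"
  define IB where "IB = ivl_mul S (ivl_mul S (2 * S, 2 * S) T) (ivl_mul S IW IW)"
  have U2: "enclosed S (u * u) IU2"
    unfolding IU2_def IU_def u_def using mul[OF mul[OF T IP] mul[OF T IP]] .
  have A: "enclosed S A IA"
    unfolding A_def IA_def
    using enclosed_sub[OF mul[OF enclosed_of_int[of S 6] mul[OF U2 U2]] enclosed_of_int[of S 2]]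
    by simp
  have W: "enclosed S (1 - u * u) IW"
    unfolding IW_def using enclosed_sub[OF enclosed_of_int[of S 1] U2] by simp
  have B: "enclosed S B IB"
    unfolding B_def IB_def using mul[OF mul[OF enclosed_of_int[of S 2] T] mul[OF W W]] by simp
  have "t / pi = u"
    by (simp add: u_def)
  then have "curvature_factor C t =
      cos t * (A * cos C + B * sin C) + sin t * (A * sin C - B * cos C)"
    unfolding curvature_factor_def A_def B_def
    by (simp add: cos_diff sin_diff power2_eq_square power4_eq_xxxx algebra_simps)
  moreover have "curvature_factor_ivl S IP SC CC T SN CS =
      ivl_add (ivl_mul S CS (ivl_add (ivl_mul S IA CC) (ivl_mul S IB SC)))
              (ivl_mul S SN (ivl_sub (ivl_mul S IA SC) (ivl_mul S IB CC)))"
    by (simp add: curvature_factor_ivl_def Let_def IU_def IU2_def IA_def IW_def IB_def)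
  ultimately show ?thesis
    using enclosed_add[OF mul[OF CS enclosed_add[OF mul[OF A CC] mul[OF B SC]]]
                          mul[OF SN enclosed_sub[OF mul[OF A SC] mul[OF B CC]]]]
    by simp
qed

lemma enclosed_upper_neg:
  assumes "enclosed S x I" "snd I < 0"
  shows "x < 0"
proof -
  have "x * of_int S < 0"
    using assms unfolding enclosed_def by (meson le_less_trans of_int_less_0_iff)
  then show ?thesis
    using S by (simp add: mult_less_0_iff)
qed

lemma certify_box_sound:
  assumes box: "certify_box S IP SC CC s c g a b"
    and s: "enclosed S (sin (of_int g / of_int S)) s"
    and c: "enclosed S (cos (of_int g / of_int S)) c"
    and "0 \<le> a" "of_int (g + a) \<le> t * of_int S" "t * of_int S \<le> of_int (g + b)"
  shows "curvature_factor C t < 0"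
proof -
  note mul = enclosed_mul[OF S]
  define d where "d = t - of_int g / of_int S"
  have t: "t = of_int g / of_int S + d"
    by (simp add: d_def)
  have "of_int a \<le> d * of_int S" "d * of_int S \<le> of_int b"
    using assms(5,6) S by (simp_all add: d_def algebra_simps)
  note SD = enclosed_sin_small[OF S \<open>0 \<le> a\<close> this] and CD = enclosed_cos_small[OF S \<open>0 \<le> a\<close> this]
  have "enclosed S (sin t)
      (ivl_add (ivl_mul S s (cos_small_ivl S a b)) (ivl_mul S c (sin_small_ivl S a b)))"
    unfolding t sin_add using enclosed_add[OF mul[OF s CD] mul[OF c SD]] .
  moreover have "enclosed S (cos t)
      (ivl_sub (ivl_mul S c (cos_small_ivl S a b)) (ivl_mul S s (sin_small_ivl S a b)))"
    unfolding t cos_add using enclosed_sub[OF mul[OF c CD] mul[OF s SD]] .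
  moreover have "enclosed S t (g + a, g + b)"
    using assms(5,6) by (simp add: enclosed_def)
  ultimately show ?thesis
    using box enclosed_curvature_factor enclosed_upper_neg
    by (fastforce simp: certify_box_def Let_def)
qed

lemma certify_cell_sound:
  assumes "certify_cell S IP SC CC n s c g a b"
    and "enclosed S (sin (of_int g / of_int S)) s" "enclosed S (cos (of_int g / of_int S)) c"
    and "0 \<le> a" "a \<le> b" "of_int (g + a) \<le> t * of_int S" "t * of_int S \<le> of_int (g + b)"
  shows "curvature_factor C t < 0"
  using assms(1,4-)
proof (induction n arbitrary: a b)
  case 0
  then show ?case using certify_box_sound assms(2,3) by simp
next
  case (Suc n)
  define m where "m = (a + b) div 2"
  show ?case
  proof (cases "certify_box S IP SC CC s c g a b")
    case True
    then show ?thesis using certify_box_sound assms(2,3) Suc.prems by blast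
  next
    case False
    then have halves: "certify_cell S IP SC CC n s c g a m" "certify_cell S IP SC CC n s c g m b"
      using Suc.prems(1) by (simp_all add: m_def)
    have "a \<le> m" "m \<le> b"
      using Suc.prems(3) by (simp_all add: m_def)
    show ?thesis
    proof (cases "t * of_int S \<le> of_int (g + m)")
      case True
      then show ?thesis using Suc.IH[OF halves(1)] Suc.prems \<open>a \<le> m\<close> by simp
    next
      case False
      then show ?thesis using Suc.IH[OF halves(2)] Suc.prems \<open>a \<le> m\<close> \<open>m \<le> b\<close> by simp
    qed
  qed
qed

lemma certify_grid_sound:
  assumes "certify_grid S IP SC CC depth H SH CH k s c g" "0 \<le> H"
    and SH: "enclosed S (sin (of_int H / of_int S)) SH"
    and CH: "enclosed S (cos (of_int H / of_int S)) CH"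
    and "enclosed S (sin (of_int g / of_int S)) s" "enclosed S (cos (of_int g / of_int S)) c"
    and "of_int g \<le> t * of_int S" "t * of_int S < of_int (g + int k * H)"
  shows "curvature_factor C t < 0"
  using assms(1,5-)
proof (induction k arbitrary: s c g)
  case 0
  then show ?case by simp
next
  case (Suc k)
  show ?case
  proof (cases "t * of_int S \<le> of_int (g + H)")
    case True
    then show ?thesis
      using certify_cell_sound[of depth s c g 0 H] Suc.prems \<open>0 \<le> H\<close> by simp
  next
    case False
    note mul = enclosed_mul[OF S]
    have angle: "real_of_int (g + H) / of_int S = of_int g / of_int S + of_int H / of_int S"
      by (simp add: add_divide_distrib)
    have "enclosed S (sin (of_int (g + H) / of_int S)) (ivl_add (ivl_mul S s CH) (ivl_mul S c SH))"
      unfolding angle sin_add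
      using enclosed_add[OF mul[OF Suc.prems(2) CH] mul[OF Suc.prems(3) SH]] .
    moreover have "enclosed S (cos (of_int (g + H) / of_int S)) (ivl_sub (ivl_mul S c CH) (ivl_mul S s SH))"
      unfolding angle cos_add
      using enclosed_sub[OF mul[OF Suc.prems(3) CH] mul[OF Suc.prems(2) SH]] .
    ultimately show ?thesis
      using Suc.prems False by (intro Suc.IH[of _ _ "g + H"]) (simp_all add: algebra_simps)
  qed
qed

end

text \<open>
  Scale \<open>2^16\<close>; the constant intervals enclose \<open>1/pi\<close>, \<open>sin (1/2)\<close> and \<open>cos (1/2)\<close>, and seven
  steps of length \<open>1/2\<close>, each cell bisected at most six times, cover \<open>[0, pi]\<close>. The second grid
  is for negative arguments.
\<close>

definition curvature_factor_certified :: "ivl \<Rightarrow> ivl \<Rightarrow> bool" where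
  "curvature_factor_certified SC CC \<longleftrightarrow>
     certify_grid 65536 (20860, 20861) SC CC 6 32768 (31419, 31420) (57513, 57514) 7
       (0, 0) (65536, 65536) 0 \<and>
     certify_grid 65536 (20860, 20861) (ivl_neg SC) CC 6 32768 (31419, 31420) (57513, 57514) 7
       (0, 0) (65536, 65536) 0"

lemma enclosed_inverse_pi: "enclosed 65536 (1 / pi) (20860, 20861)"
  using pi_approx by (simp add: enclosed_def field_simps)

lemma enclosed_trig_constants:
  "enclosed 65536 (sin (1 / 2)) (31419, 31420)" "enclosed 65536 (cos (1 / 2)) (57513, 57514)"
  "enclosed 65536 (sin 0.15) (9793, 9794)" "enclosed 65536 (cos 0.15) (64800, 64801)"
  "enclosed 65536 (sin 0.45) (28505, 28506)" "enclosed 65536 (cos 0.45) (59011, 59012)"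
  by (rule enclosed_sin_Maclaurin[where n = 11] enclosed_cos_Maclaurin[where n = 12];
      simp add: sin_coeff_def cos_coeff_def lessThan_nat_numeral fact_numeral power_divide)+

lemma curvature_factor_neg_if_certified:
  assumes SC: "enclosed 65536 (sin C) SC" and CC: "enclosed 65536 (cos C) CC"
    and "curvature_factor_certified SC CC" and "\<bar>t\<bar> \<le> pi"
  shows "curvature_factor C t < 0"
proof -
  have SH: "enclosed 65536 (sin (of_int 32768 / of_int 65536)) (31419, 31420)"
    and CH: "enclosed 65536 (cos (of_int 32768 / of_int 65536)) (57513, 57514)"
    using enclosed_trig_constants(1,2) by simp_all
  have start: "enclosed 65536 (sin (of_int 0 / of_int 65536)) (0, 0)"
    "enclosed 65536 (cos (of_int 0 / of_int 65536)) (65536, 65536)"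
    by (simp_all add: enclosed_def)
  note grid_sound = certify_grid_sound[OF _ enclosed_inverse_pi _ _ _ _ SH CH start]
  note grids = assms(3)[unfolded curvature_factor_certified_def]
  have range: "0 \<le> \<bar>t\<bar> * 65536" "\<bar>t\<bar> * 65536 < 7 * 32768"
    using assms(4) pi_approx by simp_all
  show ?thesis
  proof (cases "0 \<le> t")
    case True
    with grid_sound[OF _ SC CC grids[THEN conjunct1]] range show ?thesis
      by simp
  next
    case False
    have "enclosed 65536 (sin (- C)) (ivl_neg SC)" "enclosed 65536 (cos (- C)) CC"
      using enclosed_neg[OF SC] CC by simp_all
    with grid_sound[OF _ _ _ grids[THEN conjunct2]] False range
    have "curvature_factor (- C) (- t) < 0"
      by simp
    then show ?thesis
      using curvature_factor_minus[of C "- t"] by simp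
  qed
qed

lemma curvature_factor_neg:
  assumes "C \<in> {0.15, 0.45}" "\<bar>t\<bar> \<le> pi"
  shows "curvature_factor C t < 0"
proof -
  from assms(1) consider "C = 0.15" | "C = 0.45" by blast
  then show ?thesis
  proof cases
    case 1
    have "curvature_factor_certified (9793, 9794) (64800, 64801)"
      by code_simp
    then show ?thesis
      unfolding 1 using enclosed_trig_constants(3,4) assms(2) curvature_factor_neg_if_certified
      by blast
  next
    case 2
    have "curvature_factor_certified (28505, 28506) (59011, 59012)"
      by code_simp
    then show ?thesis
      unfolding 2 using enclosed_trig_constants(5,6) assms(2) curvature_factor_neg_if_certified
      by blast
  qed
qed

section \<open>Derivatives of the curve\<close>

definition bump_weight :: "real \<Rightarrow> real" where
  "bump_weight x = 1 - (x / pi) ^ 2"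

definition z1_deriv :: "real \<Rightarrow> real" where
  "z1_deriv x = - 4 * x * exp (1 - 1 / bump_weight x) / (pi ^ 2 * bump_weight x ^ 2)"

definition z1_deriv2 :: "real \<Rightarrow> real" where
  "z1_deriv2 x =
     2 * (6 * (x / pi) ^ 4 - 2) * exp (1 - 1 / bump_weight x) / (pi ^ 2 * bump_weight x ^ 4)"

lemma bump_weight_pos: "\<bar>x\<bar> < pi \<Longrightarrow> 0 < bump_weight x"
  by (simp add: bump_weight_def abs_square_less_1 abs_divide)

lemma has_real_derivative_bump_weight: "(bump_weight has_real_derivative - 2 * x / pi ^ 2) (at x)"
  unfolding bump_weight_def[abs_def]
  by (auto intro!: derivative_eq_intros simp: power2_eq_square)

lemma has_real_derivative_z1:
  assumes "\<bar>x\<bar> < pi"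
  shows "(z1 has_real_derivative z1_deriv x) (at x)"
proof -
  have "bump_weight x \<noteq> 0"
    using bump_weight_pos[OF assms] by simp
  then have "((\<lambda>x. 2 * exp (1 - 1 / bump_weight x) - 1) has_real_derivative z1_deriv x) (at x)"
    by (auto intro!: derivative_eq_intros has_real_derivative_bump_weight
        simp: z1_deriv_def field_simps power2_eq_square)
  then show ?thesis
    by (rule has_field_derivative_transform_within_open[where S = "{- pi <..< pi}"])
       (use assms in \<open>auto simp: z1_def bump_weight_def\<close>)
qed

lemma has_real_derivative_z1_deriv:
  assumes "bump_weight x \<noteq> 0"
  shows "(z1_deriv has_real_derivative z1_deriv2 x) (at x)"
proof -
  \<comment> \<open>after clearing denominators the identity holds only modulo this relation\<close>
  have w: "pi ^ 2 * bump_weight x = pi ^ 2 - x ^ 2"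
    by (simp add: bump_weight_def field_simps)
  show ?thesis
    unfolding z1_deriv_def[abs_def]
    apply (rule DERIV_cong)
     apply (use assms in \<open>auto intro!: derivative_eq_intros has_real_derivative_bump_weight\<close>)[1]
    using assms by (simp add: z1_deriv2_def field_simps) (use w in algebra)
qed

lemma deriv_z1: "\<bar>x\<bar> < pi \<Longrightarrow> deriv z1 x = z1_deriv x"
  by (rule DERIV_imp_deriv[OF has_real_derivative_z1])

lemma deriv_deriv_z1: "\<bar>x\<bar> < pi \<Longrightarrow> deriv (deriv z1) x = z1_deriv2 x"
  using bump_weight_pos[of x]
  by (intro DERIV_imp_deriv
      has_field_derivative_transform_within_open[OF has_real_derivative_z1_deriv, where S = "{- pi <..< pi}"])
     (auto simp: deriv_z1)

lemma has_real_derivative_zero_if_flat: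
  fixes f :: "real \<Rightarrow> real"
  assumes "\<And>y. a < y \<Longrightarrow> f y = f a" and "((\<lambda>h. (f (a + h) - f a) / h) \<longlongrightarrow> 0) (at_left 0)"
  shows "(f has_real_derivative 0) (at a)"
  unfolding DERIV_def
proof (rule filterlim_split_at_real)
  have "\<forall>\<^sub>F h in at_right 0. (f (a + h) - f a) / h = 0"
    using eventually_at_right_less[of 0] by eventually_elim (simp add: assms(1))
  then show "((\<lambda>h. (f (a + h) - f a) / h) \<longlongrightarrow> 0) (at_right 0)"
    by (rule tendsto_eventually)
qed (fact assms(2))

lemma eventually_inside_left_of_pi: "\<forall>\<^sub>F h in at_left 0. \<bar>pi + h\<bar> < pi"
proof -
  have "\<forall>\<^sub>F h in at_left (0::real). h \<in> {- pi <..< 0}"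
    by (rule eventually_at_left_real) simp
  then show ?thesis
    by eventually_elim auto
qed

lemma has_real_derivative_z1_pi: "(z1 has_real_derivative 0) (at pi)"
proof (rule has_real_derivative_zero_if_flat)
  show "z1 y = z1 pi" if "pi < y" for y
    using that by (simp add: z1_def)
  have "\<forall>\<^sub>F h in at_left 0.
      2 * exp (1 - 1 / (1 - ((pi + h) / pi) ^ 2)) / h = (z1 (pi + h) - z1 pi) / h"
    using eventually_inside_left_of_pi by eventually_elim (simp add: z1_def)
  moreover have "((\<lambda>h. 2 * exp (1 - 1 / (1 - ((pi + h) / pi) ^ 2)) / h) \<longlongrightarrow> 0) (at_left 0)"
    by real_asymp
  ultimately show "((\<lambda>h. (z1 (pi + h) - z1 pi) / h) \<longlongrightarrow> 0) (at_left 0)"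
    by (rule Lim_transform_eventually[rotated])
qed

lemma deriv_z1_pi: "deriv z1 pi = 0"
  by (rule DERIV_imp_deriv[OF has_real_derivative_z1_pi])

lemma deriv_deriv_z1_pi: "deriv (deriv z1) pi = 0"
proof (rule DERIV_imp_deriv, rule has_real_derivative_zero_if_flat)
  show "deriv z1 y = deriv z1 pi" if "pi < y" for y
  proof -
    have "(z1 has_real_derivative 0) (at y)"
      by (rule has_field_derivative_transform_within_open[where f = "\<lambda>_. -1" and S = "{pi <..}"])
         (use that in \<open>auto simp: z1_def\<close>)
    then show ?thesis
      by (simp add: DERIV_imp_deriv deriv_z1_pi)
  qed
  have "\<forall>\<^sub>F h in at_left 0. z1_deriv (pi + h) / h = (deriv z1 (pi + h) - deriv z1 pi) / h"
    using eventually_inside_left_of_pi by eventually_elim (simp add: deriv_z1 deriv_z1_pi)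
  moreover have "((\<lambda>h. z1_deriv (pi + h) / h) \<longlongrightarrow> 0) (at_left 0)"
    unfolding z1_deriv_def bump_weight_def by real_asymp
  ultimately show "((\<lambda>h. (deriv z1 (pi + h) - deriv z1 pi) / h) \<longlongrightarrow> 0) (at_left 0)"
    by (rule Lim_transform_eventually[rotated])
qed

lemma deriv_z2: "deriv (z2 C) = (\<lambda>x. cos (x - C))"
proof
  fix x
  have "(z2 C has_real_derivative cos (x - C)) (at x)"
    unfolding z2_def[abs_def] by (auto intro!: derivative_eq_intros)
  then show "deriv (z2 C) x = cos (x - C)"
    by (rule DERIV_imp_deriv)
qed

lemma deriv_deriv_z2: "deriv (deriv (z2 C)) x = - sin (x - C)"
  unfolding deriv_z2 by (rule DERIV_imp_deriv) (auto intro!: derivative_eq_intros)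

lemma curvature_numerator_eq:
  assumes "bump_weight x \<noteq> 0"
  shows "- z1_deriv2 x * cos (x - C) + - sin (x - C) * z1_deriv x =
    - 2 * exp (1 - 1 / bump_weight x) * curvature_factor C x / (pi ^ 2 * bump_weight x ^ 4)"
proof -
  have w: "pi ^ 2 * bump_weight x = pi ^ 2 - x ^ 2"
    by (simp add: bump_weight_def field_simps)
  from assms show ?thesis
    by (simp add: z1_deriv_def z1_deriv2_def curvature_factor_def field_simps) (use w in algebra)
qed

lemma curvature_at_pi: "curvature C pi = 0"
  by (simp add: curvature_def deriv_z1_pi deriv_deriv_z1_pi)

lemma curvature_pos:
  assumes "C \<in> {0.15, 0.45}" "\<bar>x\<bar> < pi"
  shows "0 < curvature C x"
proof -
  have w: "0 < bump_weight x"
    by (rule bump_weight_pos[OF assms(2)])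
  define N where "N = - deriv (deriv z1) x * deriv (z2 C) x + deriv (deriv (z2 C)) x * deriv z1 x"
  have "N = - 2 * exp (1 - 1 / bump_weight x) * curvature_factor C x / (pi ^ 2 * bump_weight x ^ 4)"
    unfolding N_def deriv_deriv_z2
    using curvature_numerator_eq[of x C] w assms(2) by (simp add: deriv_z1 deriv_deriv_z1 deriv_z2)
  moreover have "curvature_factor C x < 0"
    using curvature_factor_neg[OF assms(1)] assms(2) by simp
  ultimately have "0 < N"
    using w by (simp add: mult_pos_neg divide_neg_pos)
  then have "deriv z1 x \<noteq> 0 \<or> deriv (z2 C) x \<noteq> 0"
    by (auto simp: N_def)
  then have "0 < (deriv z1 x)\<^sup>2 + (deriv (z2 C) x)\<^sup>2"
    by (simp add: sum_power2_gt_zero_iff)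
  then have "0 < ((deriv z1 x)\<^sup>2 + (deriv (z2 C) x)\<^sup>2) powr (3 / 2)"
    by (subst powr_gt_zero) linarith
  moreover have "curvature C x = N / ((deriv z1 x)\<^sup>2 + (deriv (z2 C) x)\<^sup>2) powr (3 / 2)"
    unfolding curvature_def N_def ..
  ultimately show ?thesis
    using \<open>0 < N\<close> by (simp add: divide_pos_pos)
qed

theorem corollary1:
  fixes C :: real
  assumes "C \<in> {0.15, 0.45}"
  shows "\<forall>x \<in> {-pi<..pi}. curvature C x = 0 \<longleftrightarrow> x = pi"
proof
  fix x
  assume x: "x \<in> {-pi<..pi}"
  show "curvature C x = 0 \<longleftrightarrow> x = pi"
  proof (cases "x = pi")
    case True
    then show ?thesis by (simp add: curvature_at_pi)
  next
    case False
    with x have "\<bar>x\<bar> < pi" by auto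
    with False show ?thesis
      using curvature_pos[OF assms] by fastforce
  qed
qed

end
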